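(* Let $f:\mathbb N\to\{0,1\}$ and let $\theta$ be a closed term with $\theta\Vdash\exists n^{\mathbb N}(f(n)=1)$. Then $\theta\star p\cdot\pi_0\succ p\star\underline n\cdot\varpi$ for some integer $n$ with $f(n)=1$ and some stack $\varpi$.
   Context: Fix an integer $N\ge 0$. The set $\Lambda$ of terms is the smallest set containing the constants $B,C,I,K,W,cc,A$ and $p,q_0,\dots,q_N$, closed under application $(\xi)\eta$ (written $\xi\eta$), and containing, for each sequence $(\xi_i)_{i\in\mathbb N}$ of closed terms (no occurrence of $p,q_0,\dots,q_N$), a constant $\bigwedge_i\xi_i$ (injectively, well-founded). Stacks: finite sequences $t_0\cdot\ldots\cdot t_{n-1}\cdot\pi_0$ of terms, $\pi_0$ the empty stack; $\Pi$ the set of stacks. $\ell_t=((C)(B)CB)t$, $k_{\pi_0}=A$, $k_{t\cdot\pi}=(\ell_t)k_\pi$; $\sigma=(BW)(C)(B)BB$, $\underline0=(K)I$, $\underline{n+1}=(\sigma)\underline n$. Execution $\succ$: least preorder on $\Lambda\times\Pi$ with $(\xi)\eta\star\pi\succ\xi\star\eta\cdot\pi$; $B\star\xi\cdot\eta\cdot\zeta\cdot\pi\succ\xi\star(\eta)\zeta\cdot\pi$; $C\star\xi\cdot\eta\cdot\zeta\cdot\pi\succ\xi\star\zeta\cdot\eta\cdot\pi$; $I\star\xi\cdot\pi\succ\xi\star\pi$; $K\star\xi\cdot\eta\cdot\pi\succ\xi\star\pi$; $W\star\xi\cdot\eta\cdot\pi\succ\xi\star\eta\cdot\eta\cdot\pi$;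 $cc\star\xi\cdot\pi\succ\xi\star k_\pi\cdot\pi$; $A\star\xi\cdot\pi\succ\xi\star\pi_0$; $\bigwedge_i\xi_i\star\underline n\cdot\pi\succ\xi_n\star\pi$. Pole $\perp\!\!\!\perp=\{\xi\star\pi:\exists\varpi,\ \xi\star\pi\succ p\star\varpi\}$. Realizability (Krivine): $\xi\Vdash F$ iff $\xi\star\pi\in\perp\!\!\!\perp$ for all $\pi\in\|F\|$, where $\|\bot\|=\Pi$, $\|\top\|=\emptyset$, $\|A\to B\|=\{\eta\cdot\pi:\eta\Vdash A,\pi\in\|B\|\}$, $\|\forall n^{\mathbb N}F[n]\|=\{\underline n\cdot\pi:n\in\mathbb N,\pi\in\|F[n]\|\}$; $\neg A$ is $A\to\bot$ and $\exists n^{\mathbb N}F[n]$ is $\neg\forall n^{\mathbb N}\neg F[n]$. For a function $f$ of the ground model, the formula $f(n)\neq1$ has falsity value $\|\bot\|=\Pi$ if $f(n)=1$ and $\|\top\|=\emptyset$ if $f(n)\neq1$. *)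

theory Defs
  imports Main
begin

text \<open>Terms of Lambda. The constant Inf s stands for the infinitary constant
  bigwedge_i s(i); Q j stands for q_j; only q_0..q_N are allowed (see wf).\<close>
datatype trm = cB | cC | cI | cK | cW | cCC | cA | cP | cQ nat
  | App trm trm | Inf "nat \<Rightarrow> trm"

primrec closed :: "trm \<Rightarrow> bool" where
  "closed cB = True" | "closed cC = True" | "closed cI = True" | "closed cK = True"
| "closed cW = True" | "closed cCC = True" | "closed cA = True"
| "closed cP = False" | "closed (cQ j) = False"
| "closed (App x y) = (closed x \<and> closed y)"
| "closed (Inf s) = True"

primrec wf :: "nat \<Rightarrow> trm \<Rightarrow> bool" where
  "wf N cB = True" | "wf N cC = True" | "wf N cI = True" | "wf N cK = True"
| "wf N cW = True" | "wf N cCC = True" | "wf N cA = True"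
| "wf N cP = True" | "wf N (cQ j) = (j \<le> N)"
| "wf N (App x y) = (wf N x \<and> wf N y)"
| "wf N (Inf s) = (\<forall>i. closed (s i) \<and> wf N (s i))"

type_synonym stack = "trm list"

definition Stacks :: "nat \<Rightarrow> stack set" where
  "Stacks N = {\<pi>. \<forall>t\<in>set \<pi>. wf N t}"

definition ell :: "trm \<Rightarrow> trm" where
  "ell t = App (App cC (App (App cB cC) cB)) t"

primrec kk :: "stack \<Rightarrow> trm" where
  "kk [] = cA"
| "kk (t # \<pi>) = App (ell t) (kk \<pi>)"

definition sigma :: trm where
  "sigma = App (App cB cW) (App cC (App (App cB cB) cB))"

primrec num :: "nat \<Rightarrow> trm" where
  "num 0 = App cK cI"
| "num (Suc n) = App sigma (num n)"

inductive step :: "trm \<times> stack \<Rightarrow> trm \<times> stack \<Rightarrow> bool" where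
  "step (App x y, \<pi>) (x, y # \<pi>)"
| "step (cB, x # y # z # \<pi>) (x, App y z # \<pi>)"
| "step (cC, x # y # z # \<pi>) (x, z # y # \<pi>)"
| "step (cI, x # \<pi>) (x, \<pi>)"
| "step (cK, x # y # \<pi>) (x, \<pi>)"
| "step (cW, x # y # \<pi>) (x, y # y # \<pi>)"
| "step (cCC, x # \<pi>) (x, kk \<pi> # \<pi>)"
| "step (cA, x # \<pi>) (x, [])"
| "step (Inf s, num n # \<pi>) (s n, \<pi>)"

definition exec :: "trm \<times> stack \<Rightarrow> trm \<times> stack \<Rightarrow> bool" where
  "exec = step\<^sup>*\<^sup>*"

definition pole :: "trm \<times> stack \<Rightarrow> bool" where
  "pole c = (\<exists>w. exec c (cP, w))"

definition realizes :: "nat \<Rightarrow> trm \<Rightarrow> stack set \<Rightarrow> bool" where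
  "realizes N \<xi> F = (\<forall>\<pi>\<in>F. pole (\<xi>, \<pi>))"

definition fv_bot :: "nat \<Rightarrow> stack set" where
  "fv_bot N = Stacks N"

definition fv_top :: "stack set" where
  "fv_top = {}"

definition fv_imp :: "nat \<Rightarrow> stack set \<Rightarrow> stack set \<Rightarrow> stack set" where
  "fv_imp N FA FB = {\<eta> # \<pi> | \<eta> \<pi>. wf N \<eta> \<and> realizes N \<eta> FA \<and> \<pi> \<in> FB}"

definition fv_all :: "(nat \<Rightarrow> stack set) \<Rightarrow> stack set" where
  "fv_all F = {num n # \<pi> | n \<pi>. \<pi> \<in> F n}"

definition fv_neq1 :: "nat \<Rightarrow> (nat \<Rightarrow> nat) \<Rightarrow> nat \<Rightarrow> stack set" where
  "fv_neq1 N f n = (if f n = 1 then fv_bot N else fv_top)"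

text \<open>exists n. f(n)=1  is  not (forall n. f(n) \<noteq> 1)\<close>
definition fv_ex_eq1 :: "nat \<Rightarrow> (nat \<Rightarrow> nat) \<Rightarrow> stack set" where
  "fv_ex_eq1 N f = fv_imp N (fv_all (fv_neq1 N f)) (fv_bot N)"

end

theory Submission
  imports Defs
begin

text \<open>Let \<open>\<xi>\<close> be the term \<open>(C \<And>\<^sub>i\<xi>\<^sub>i) p\<close> where \<open>\<xi>\<^sub>n = I\<close> if \<open>f(n) = 1\<close> and otherwise \<open>\<xi>\<^sub>n\<close> is an
  infinitary constant that blocks on \<open>p\<close>. Then \<open>\<xi> \<star> n\<cdot>\<pi> \<succ> p \<star> \<pi>\<close> whenever \<open>f(n) = 1\<close>, so \<open>\<xi>\<close>
  realizes \<open>\<forall>n. f(n) \<noteq> 1\<close> and \<open>\<theta> \<star> \<xi>\<cdot>\<pi>\<^sub>0\<close> reaches \<open>p\<close>. Execution is deterministic, and since \<open>\<theta>\<close>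
  is closed, the run of \<open>\<theta> \<star> \<xi>\<cdot>\<pi>\<^sub>0\<close> is the run of \<open>\<theta> \<star> p\<cdot>\<pi>\<^sub>0\<close> with \<open>\<xi>\<close> substituted for \<open>p\<close>, up to
  the first time \<open>p\<close> comes into head position, say in \<open>p \<star> \<varpi>\<close>. From there \<open>\<xi>\<close> runs on
  \<open>\<varpi>[\<xi>/p]\<close> and can only reach \<open>p\<close> if \<open>\<varpi>\<close> starts with a numeral \<open>n\<close> with \<open>f(n) = 1\<close>.\<close>

lemma num_inject: "num n = num m \<longleftrightarrow> n = m"
proof (induction n arbitrary: m)
  case 0 then show ?case by (cases m) (auto simp: sigma_def)
next
  case (Suc n) then show ?case by (cases m) (auto simp: sigma_def)
qed

lemma num_neq_p [simp]: "cP \<noteq> num n"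
  by (cases n) auto

lemma step_deterministic: "step c d \<Longrightarrow> step c e \<Longrightarrow> d = e"
  by (induction rule: step.induct) (auto elim: step.cases simp: num_inject)

lemma rtranclp_step_to_p_first_step:
  assumes "step\<^sup>*\<^sup>* a (cP, w)" and "fst a \<noteq> cP"
  obtains a' where "step a a'" and "step\<^sup>*\<^sup>* a' (cP, w)"
  using assms by (metis converse_rtranclpE fst_conv)

definition wf_process :: "nat \<Rightarrow> trm \<times> stack \<Rightarrow> bool" where
  "wf_process N c \<longleftrightarrow> wf N (fst c) \<and> snd c \<in> Stacks N"

lemma wf_kk: "\<pi> \<in> Stacks N \<Longrightarrow> wf N (kk \<pi>)"
  by (induction \<pi>) (auto simp: ell_def Stacks_def)

lemma step_wf_process: "step c d \<Longrightarrow> wf_process N c \<Longrightarrow> wf_process N d"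
  by (induction rule: step.induct) (auto simp: wf_process_def Stacks_def wf_kk)

primrec subst_p :: "trm \<Rightarrow> trm \<Rightarrow> trm" where
  "subst_p u cB = cB" | "subst_p u cC = cC" | "subst_p u cI = cI" | "subst_p u cK = cK"
| "subst_p u cW = cW" | "subst_p u cCC = cCC" | "subst_p u cA = cA"
| "subst_p u cP = u" | "subst_p u (cQ j) = cQ j"
| "subst_p u (App x y) = App (subst_p u x) (subst_p u y)"
| "subst_p u (Inf s) = Inf s"

definition subst_process :: "trm \<Rightarrow> trm \<times> stack \<Rightarrow> trm \<times> stack" where
  "subst_process u c = (subst_p u (fst c), map (subst_p u) (snd c))"

primrec has_Inf :: "trm \<Rightarrow> bool" where
  "has_Inf cB = False" | "has_Inf cC = False" | "has_Inf cI = False" | "has_Inf cK = False"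
| "has_Inf cW = False" | "has_Inf cCC = False" | "has_Inf cA = False"
| "has_Inf cP = False" | "has_Inf (cQ j) = False"
| "has_Inf (App x y) = (has_Inf x \<or> has_Inf y)"
| "has_Inf (Inf s) = True"

lemma has_Inf_num [simp]: "\<not> has_Inf (num n)"
  by (induction n) (auto simp: sigma_def)

lemma subst_p_closed: "closed t \<Longrightarrow> subst_p u t = t"
  by (induction t) auto

lemma subst_p_num [simp]: "subst_p u (num n) = num n"
  by (induction n) (auto simp: sigma_def)

lemma subst_p_kk [simp]: "subst_p u (kk \<pi>) = kk (map (subst_p u) \<pi>)"
  by (induction \<pi>) (auto simp: ell_def)

lemma subst_p_eq_atom_iff [simp]:
  assumes "has_Inf u"
  shows "subst_p u x = cB \<longleftrightarrow> x = cB" "subst_p u x = cC \<longleftrightarrow> x = cC"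
    "subst_p u x = cI \<longleftrightarrow> x = cI" "subst_p u x = cK \<longleftrightarrow> x = cK"
    "subst_p u x = cW \<longleftrightarrow> x = cW" "subst_p u x = cCC \<longleftrightarrow> x = cCC"
    "subst_p u x = cA \<longleftrightarrow> x = cA" "subst_p u x \<noteq> cP"
  using assms by (cases x; auto)+

lemma subst_p_eq_App_iff:
  "subst_p u x = App a b \<longleftrightarrow>
    (x = cP \<and> u = App a b) \<or> (\<exists>x1 x2. x = App x1 x2 \<and> subst_p u x1 = a \<and> subst_p u x2 = b)"
  by (cases x) auto

text \<open>A term containing an infinitary constant is not a subterm of a numeral.\<close>
lemma subst_p_eq_numD: "has_Inf u \<Longrightarrow> subst_p u x = num n \<Longrightarrow> x = num n"
proof (induction n arbitrary: x)
  case 0 then show ?case by (auto simp: subst_p_eq_App_iff)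
next
  case (Suc n) then show ?case by (auto simp: subst_p_eq_App_iff sigma_def)
qed

lemma step_subst_process:
  "step c d \<Longrightarrow> wf_process N c \<Longrightarrow> step (subst_process u c) (subst_process u d)"
proof (induction rule: step.induct)
  case (9 s n \<pi>)
  then have "closed (s n)" by (simp add: wf_process_def)
  then show ?case by (simp add: subst_process_def subst_p_closed step.intros)
qed (auto simp: subst_process_def intro: step.intros)

lemma step_subst_processD:
  assumes "has_Inf u" and "step (subst_process u c) e" and "fst c \<noteq> cP"
  shows "\<exists>d. step c d"
  using assms unfolding subst_process_def
  by (cases "fst c"; cases c)
     (auto elim!: step.cases intro: step.intros dest!: subst_p_eq_numD[OF \<open>has_Inf u\<close>])

text \<open>As long as \<open>p\<close> is not in head position, a process and its substitution instance run in
  lockstep; so a run of the instance that brings \<open>p\<close> into head position passes through the instance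
  of the first process of the original run with \<open>p\<close> in head position.\<close>
lemma rtranclp_step_subst_process_to_p:
  assumes "step\<^sup>*\<^sup>* (subst_process u c) b" and "fst b = cP"
    and "has_Inf u" and "wf_process N c"
  obtains d where "step\<^sup>*\<^sup>* c d" and "fst d = cP" and "wf_process N d"
    and "step\<^sup>*\<^sup>* (subst_process u d) b"
proof -
  have "\<exists>d. step\<^sup>*\<^sup>* c d \<and> fst d = cP \<and> wf_process N d \<and> step\<^sup>*\<^sup>* (subst_process u d) b"
    if "step\<^sup>*\<^sup>* e b" "e = subst_process u c" "wf_process N c" for e c
    using that
  proof (induction arbitrary: c rule: converse_rtranclp_induct)
    case base
    then show ?case using \<open>fst b = cP\<close> \<open>has_Inf u\<close> by (simp add: subst_process_def)
  next
    case (step e e')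
    show ?case
    proof (cases "fst c = cP")
      case True
      then show ?thesis
        using step.hyps step.prems by (intro exI[of _ c]) (auto intro: converse_rtranclp_into_rtranclp)
    next
      case False
      with step \<open>has_Inf u\<close> obtain d0 where d0: "step c d0"
        using step_subst_processD by blast
      then have "e' = subst_process u d0"
        using step step_subst_process step_deterministic by blast
      moreover have "wf_process N d0" using step_wf_process d0 step by blast
      ultimately obtain d where "step\<^sup>*\<^sup>* d0 d" "fst d = cP" "wf_process N d"
        "step\<^sup>*\<^sup>* (subst_process u d) b"
        using step.IH by blast
      with d0 show ?thesis by (meson converse_rtranclp_into_rtranclp)
    qed
  qed
  with assms that show ?thesis by blast
qed

definition test_branch :: "(nat \<Rightarrow> nat) \<Rightarrow> nat \<Rightarrow> trm" where
  "test_branch f n = (if f n = 1 then cI else Inf (\<lambda>_. cI))"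

definition test :: "(nat \<Rightarrow> nat) \<Rightarrow> trm" where
  "test f = App (App cC (Inf (test_branch f))) cP"

lemma has_Inf_test: "has_Inf (test f)"
  by (simp add: test_def)

lemma wf_test: "wf N (test f)"
  by (simp add: test_def test_branch_def)

lemma test_runs_to_p: "f n = 1 \<Longrightarrow> step\<^sup>*\<^sup>* (test f, num n # \<pi>) (cP, \<pi>)"
proof -
  assume "f n = 1"
  have "step (test f, num n # \<pi>) (App cC (Inf (test_branch f)), cP # num n # \<pi>)"
    by (simp add: test_def step.intros)
  moreover have "step \<dots> (cC, Inf (test_branch f) # cP # num n # \<pi>)"
    by (simp add: step.intros)
  moreover have "step \<dots> (Inf (test_branch f), num n # cP # \<pi>)"
    by (simp add: step.intros)
  moreover have "step \<dots> (cI, cP # \<pi>)"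
    using step.intros(9)[of "test_branch f" n "cP # \<pi>"] \<open>f n = 1\<close> by (simp add: test_branch_def)
  moreover have "step \<dots> (cP, \<pi>)"
    by (simp add: step.intros)
  ultimately show ?thesis
    by (meson converse_rtranclp_into_rtranclp rtranclp.rtrancl_refl)
qed

lemma realizes_test: "realizes N (test f) (fv_all (fv_neq1 N f))"
  unfolding realizes_def fv_all_def
proof safe
  fix n \<pi> assume "\<pi> \<in> fv_neq1 N f n"
  then have "f n = 1" by (auto simp: fv_neq1_def fv_top_def split: if_splits)
  then show "pole (test f, num n # \<pi>)"
    unfolding pole_def exec_def using test_runs_to_p by blast
qed

lemma test_to_p_stack:
  assumes "step\<^sup>*\<^sup>* (test f, \<rho>) (cP, w)"
  obtains n \<rho>' where "\<rho> = num n # \<rho>'" and "f n = 1"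
proof -
  let ?b = "Inf (test_branch f)"
  from assms obtain a1 where "step (test f, \<rho>) a1" "step\<^sup>*\<^sup>* a1 (cP, w)"
    by (rule rtranclp_step_to_p_first_step) (simp add: test_def)
  then have run2: "step\<^sup>*\<^sup>* (App cC ?b, cP # \<rho>) (cP, w)"
    by (auto simp: test_def elim: step.cases)
  from run2 obtain a2 where "step (App cC ?b, cP # \<rho>) a2" "step\<^sup>*\<^sup>* a2 (cP, w)"
    by (rule rtranclp_step_to_p_first_step) simp
  then have run3: "step\<^sup>*\<^sup>* (cC, ?b # cP # \<rho>) (cP, w)"
    by (auto elim: step.cases)
  from run3 obtain a3 where "step (cC, ?b # cP # \<rho>) a3" "step\<^sup>*\<^sup>* a3 (cP, w)"
    by (rule rtranclp_step_to_p_first_step) simp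
  then obtain t \<rho>' where \<rho>: "\<rho> = t # \<rho>'" and run4: "step\<^sup>*\<^sup>* (?b, t # cP # \<rho>') (cP, w)"
    by (auto elim: step.cases)
  from run4 obtain a4 where "step (?b, t # cP # \<rho>') a4" "step\<^sup>*\<^sup>* a4 (cP, w)"
    by (rule rtranclp_step_to_p_first_step) simp
  then obtain n where t: "t = num n" and run5: "step\<^sup>*\<^sup>* (test_branch f n, cP # \<rho>') (cP, w)"
    by (auto elim: step.cases)
  have "f n = 1"
  proof (rule ccontr)
    assume "f n \<noteq> 1"
    with run5 have "step\<^sup>*\<^sup>* (Inf (\<lambda>_. cI), cP # \<rho>') (cP, w)"
      by (simp add: test_branch_def)
    then obtain a5 where "step (Inf (\<lambda>_. cI), cP # \<rho>') a5"
      by (rule rtranclp_step_to_p_first_step) simp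
    then show False by (auto elim: step.cases)
  qed
  with \<rho> t that show ?thesis by blast
qed

theorem proposition1:
  fixes N :: nat and f :: "nat \<Rightarrow> nat" and \<theta> :: trm
  assumes "\<forall>n. f n \<in> {0, 1}"
    and "wf N \<theta>" and "closed \<theta>"
    and "realizes N \<theta> (fv_ex_eq1 N f)"
  shows "\<exists>n w. f n = 1 \<and> w \<in> Stacks N \<and> exec (\<theta>, [cP]) (cP, num n # w)"
proof -
  have "[test f] \<in> fv_ex_eq1 N f"
    using wf_test realizes_test by (auto simp: fv_ex_eq1_def fv_imp_def fv_bot_def Stacks_def)
  then have "pole (subst_process (test f) (\<theta>, [cP]))"
    using assms(3,4) by (simp add: realizes_def subst_process_def subst_p_closed)
  then obtain w' where "step\<^sup>*\<^sup>* (subst_process (test f) (\<theta>, [cP])) (cP, w')"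
    by (auto simp: pole_def exec_def)
  moreover have "wf_process N (\<theta>, [cP])"
    using assms(2) by (simp add: wf_process_def Stacks_def)
  ultimately obtain d where run: "step\<^sup>*\<^sup>* (\<theta>, [cP]) d" and "fst d = cP"
    and "wf_process N d" and "step\<^sup>*\<^sup>* (subst_process (test f) d) (cP, w')"
    using has_Inf_test by (auto elim: rtranclp_step_subst_process_to_p)
  then obtain w where "d = (cP, w)" and "w \<in> Stacks N"
    and "step\<^sup>*\<^sup>* (test f, map (subst_p (test f)) w) (cP, w')"
    by (cases d) (auto simp: wf_process_def subst_process_def)
  then obtain n v where "w = num n # v" and "f n = 1"
    by (auto simp: Cons_eq_map_conv dest!: subst_p_eq_numD[OF has_Inf_test]
        elim!: test_to_p_stack)
  with run \<open>d = (cP, w)\<close> \<open>w \<in> Stacks N\<close> show ?thesis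
    by (auto simp: exec_def Stacks_def)
qed

end
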